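(* Let $(K,D)$ be a differential field and $v$ a differential valuation on $(K,D)$. Then $D:(K,v)\to(K,v)$ is immediate if and only if $(K,D,v)$ admits asymptotic integration.
   Context: $C=\{a\in K: Da=0\}$ is the field of constants. A valuation $v$ of $K$ is a differential valuation (in the sense of Rosenlicht) if $v$ is trivial on $C$, for every $y\in K$ with $vy=0$ there is a unique $c\in C$ with $v(y-c)>0$, and for all $a,b\in K$ with $va\ge0$, $vb>0$, $b\ne0$: $v(bDa/Db)>0$. $(K,D,v)$ admits asymptotic integration if for every $a'\in K\setminus\{0\}$ there is $a\in K$ with $v(a'-Da)>va'$. $K$ is an ultrametric space with $u(a,b)=v(a-b)$; with $B(x,y)=\{z:v(x-z)\ge v(x-y)\}$, a point $z'$ is an attractor for a map $g$ if for every $y$ with $z'\ne gy$ there is $z$ with $v(gz-z')>v(gy-z')$ and $g(B(y,z))\subseteq B(gy,z')$; $g$ is immediate if every point is an attractor. *)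

theory Defs
  imports Main "HOL-Library.Extended"
begin

definition valuation :: "('a::field \<Rightarrow> 'g::linordered_ab_group_add extended) \<Rightarrow> bool" where
  "valuation v \<longleftrightarrow>
     (\<forall>x. v x = Pinf \<longleftrightarrow> x = 0) \<and> (\<forall>x. v x \<noteq> Minf) \<and>
     (\<forall>x y. v (x * y) = v x + v y) \<and>
     (\<forall>x y. min (v x) (v y) \<le> v (x + y))"

definition derivation :: "('a::field \<Rightarrow> 'a) \<Rightarrow> bool" where
  "derivation D \<longleftrightarrow> (\<forall>a b. D (a + b) = D a + D b) \<and> (\<forall>a b. D (a * b) = a * D b + D a * b)"

definition constants :: "('a::field \<Rightarrow> 'a) \<Rightarrow> 'a set" where
  "constants D = {a. D a = 0}"

text \<open>Differential valuation in the sense of Rosenlicht.\<close>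
definition differential_valuation ::
  "('a::field \<Rightarrow> 'a) \<Rightarrow> ('a \<Rightarrow> 'g::linordered_ab_group_add extended) \<Rightarrow> bool" where
  "differential_valuation D v \<longleftrightarrow>
     valuation v \<and>
     (\<forall>c \<in> constants D. c \<noteq> 0 \<longrightarrow> v c = 0) \<and>
     (\<forall>y. v y = 0 \<longrightarrow> (\<exists>!c. c \<in> constants D \<and> v (y - c) > 0)) \<and>
     (\<forall>a b. v a \<ge> 0 \<and> v b > 0 \<and> b \<noteq> 0 \<longrightarrow> v (b * D a / D b) > 0)"

definition asymptotic_integration ::
  "('a::field \<Rightarrow> 'a) \<Rightarrow> ('a \<Rightarrow> 'g::linordered_ab_group_add extended) \<Rightarrow> bool" where
  "asymptotic_integration D v \<longleftrightarrow> (\<forall>a'. a' \<noteq> 0 \<longrightarrow> (\<exists>a. v (a' - D a) > v a'))"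

definition vball :: "('a::field \<Rightarrow> 'g::linordered_ab_group_add extended) \<Rightarrow> 'a \<Rightarrow> 'a \<Rightarrow> 'a set" where
  "vball v x y = {z. v (x - z) \<ge> v (x - y)}"

definition attractor ::
  "('a::field \<Rightarrow> 'g::linordered_ab_group_add extended) \<Rightarrow> ('a \<Rightarrow> 'a) \<Rightarrow> 'a \<Rightarrow> bool" where
  "attractor v g z' \<longleftrightarrow>
     (\<forall>y. z' \<noteq> g y \<longrightarrow>
        (\<exists>z. v (g z - z') > v (g y - z') \<and> g ` vball v y z \<subseteq> vball v (g y) z'))"

definition immediate ::
  "('a::field \<Rightarrow> 'g::linordered_ab_group_add extended) \<Rightarrow> ('a \<Rightarrow> 'a) \<Rightarrow> bool" where
  "immediate v g \<longleftrightarrow> (\<forall>z'. attractor v g z')"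

end

theory Submission
  imports Defs
begin

text \<open>If \<open>v a \<noteq> 0\<close> and \<open>D a \<noteq> 0\<close>, then \<open>v t \<ge> v a\<close> implies \<open>v (D t) \<ge> v (D a)\<close>:
  writing \<open>t = u a\<close> with \<open>v u \<ge> 0\<close>, the summand \<open>u D a\<close> of \<open>D t\<close> has value at least
  \<open>v (D a)\<close>, while Rosenlicht's axiom (applied to \<open>a\<close> or to \<open>1/a\<close>, whichever has positive
  value) gives the summand \<open>a D u\<close> strictly larger value.
  Hence \<open>D\<close> maps the ball \<open>B(y, y + a)\<close> into the ball of radius \<open>v (D a)\<close> around \<open>D y\<close>.
  Given \<open>z' \<noteq> D y\<close>, asymptotic integration provides \<open>a\<close> with \<open>D a\<close> closer to \<open>z' - D y\<close>
  than \<open>z' - D y\<close> is to \<open>0\<close>; shifting \<open>a\<close> by a constant we may assume \<open>v a \<noteq> 0\<close>, and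
  then \<open>z = y + a\<close> witnesses that \<open>z'\<close> is an attractor. Conversely, the attractor property
  of \<open>a'\<close> at \<open>y = 0\<close> is literally an asymptotic integral of \<open>a'\<close>.\<close>

lemma extended_less_add_Fin:
  fixes x :: "'g::linordered_ab_group_add extended"
  shows "0 < x \<Longrightarrow> Fin d < x + Fin d"
  by (cases x) (auto simp: zero_extended_def)

lemma extended_le_add:
  fixes x y :: "'g::linordered_ab_group_add extended"
  shows "0 \<le> x \<Longrightarrow> y \<le> x + y"
  by (metis add_0 add_right_mono)

context
  fixes v :: "'a::field \<Rightarrow> 'g::linordered_ab_group_add extended"
  assumes valuation: "valuation v"
begin

lemma valuation_eq_Pinf_iff: "v x = Pinf \<longleftrightarrow> x = 0"
  using valuation unfolding valuation_def by blast

lemma valuation_mult: "v (x * y) = v x + v y"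
  using valuation unfolding valuation_def by blast

lemma valuation_add: "min (v x) (v y) \<le> v (x + y)"
  using valuation unfolding valuation_def by blast

lemma valuation_not_Minf: "v x \<noteq> Minf"
  using valuation unfolding valuation_def by blast

lemma valuation_Fin:
  assumes "x \<noteq> 0"
  obtains g where "v x = Fin g"
  using assms valuation_eq_Pinf_iff valuation_not_Minf that by (cases "v x") auto

lemma valuation_one: "v 1 = 0"
proof -
  obtain g where g: "v 1 = Fin g" using valuation_Fin[of 1] by auto
  have "v 1 = v 1 + v 1" using valuation_mult[of 1 1] by simp
  then show ?thesis using g by (simp add: zero_extended_def)
qed

lemma valuation_inverse:
  assumes "x \<noteq> 0"
  shows "v (inverse x) = - v x"
proof -
  obtain g where g: "v x = Fin g" using assms by (rule valuation_Fin)
  have "v (inverse x) + Fin g = 0"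
    using valuation_mult[of "inverse x" x] valuation_one assms g by simp
  then show ?thesis using g
    by (cases "v (inverse x)") (auto simp: zero_extended_def eq_neg_iff_add_eq_0)
qed

lemma valuation_minus: "v (- x) = v x"
proof -
  obtain h where h: "v (- 1) = Fin h" using valuation_Fin[of "- 1"] by auto
  have "v (- 1) = - v (- 1)"
    using valuation_inverse[of "- 1"] by simp
  then have "h = 0" using h by simp
  then show ?thesis using valuation_mult[of "- 1" x] h
    by (cases "v x") (auto simp: zero_extended_def)
qed

lemma valuation_minus_commute: "v (x - y) = v (y - x)"
  by (metis minus_diff_eq valuation_minus)

lemma valuation_add_eq_left:
  assumes "v x < v y"
  shows "v (x + y) = v x"
proof -
  have "min (v (x + y)) (v y) \<le> v x"
    using valuation_add[of "x + y" "- y"] valuation_minus by simp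
  then show ?thesis
    using valuation_add[of x y] assms by (auto simp: min_def split: if_splits)
qed

lemma valuation_eq_if_diff_greater:
  assumes "v x < v (x - y)"
  shows "v y = v x"
  using valuation_add_eq_left[of x "y - x"] assms valuation_minus_commute[of x y] by simp

lemma immediate_imp_asymptotic_integration:
  fixes g :: "'a \<Rightarrow> 'a"
  assumes "g 0 = 0" and "immediate v g"
  shows "asymptotic_integration g v"
  unfolding asymptotic_integration_def
proof (intro allI impI)
  fix a' :: 'a assume "a' \<noteq> 0"
  with assms obtain z where "v (g 0 - a') < v (g z - a')"
    unfolding immediate_def attractor_def by (metis)
  then show "\<exists>a. v a' < v (a' - g a)"
    using assms(1) valuation_minus valuation_minus_commute by (metis diff_0)
qed

end

context
  fixes D :: "'a::field \<Rightarrow> 'a"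
  assumes derivation: "derivation D"
begin

lemma derivation_add: "D (a + b) = D a + D b"
  using derivation unfolding derivation_def by blast

lemma derivation_mult: "D (a * b) = a * D b + D a * b"
  using derivation unfolding derivation_def by blast

lemma derivation_diff: "D (a - b) = D a - D b"
  using derivation_add[of "a - b" b] by simp

lemma derivation_zero: "D 0 = 0"
  using derivation_diff[of 0 0] by simp

lemma derivation_one: "D 1 = 0"
proof -
  have "D 1 = D 1 + D 1" using derivation_mult[of 1 1] by simp
  then show ?thesis by (metis add_cancel_right_right)
qed

lemma derivation_inverse:
  assumes "a \<noteq> 0"
  shows "D (inverse a) = - D a / a\<^sup>2"
proof -
  have "a * D (inverse a) + D a * inverse a = 0"
    using derivation_mult[of a "inverse a"] derivation_one assms by simp
  then have "a * D (inverse a) = - D a / a" by (simp add: eq_neg_iff_add_eq_0 divide_inverse)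
  then show ?thesis using assms by (simp add: field_simps power2_eq_square)
qed

end

locale differential_valued_field =
  fixes D :: "'a::field \<Rightarrow> 'a" and v :: "'a \<Rightarrow> 'g::linordered_ab_group_add extended"
  assumes derivation: "derivation D"
    and differential_valuation: "differential_valuation D v"
begin

lemma valuation: "valuation v"
  using differential_valuation unfolding differential_valuation_def by blast

lemma unit_near_constant:
  assumes "v y = 0"
  obtains c where "D c = 0" and "v (y - c) > 0"
  using differential_valuation assms unfolding differential_valuation_def constants_def
  by blast

lemma rosenlicht_quotient_pos:
  assumes "v u \<ge> 0" and "v b > 0" and "b \<noteq> 0"
  shows "v (b * D u / D b) > 0"
  using differential_valuation assms unfolding differential_valuation_def by blast

text \<open>For \<open>v b < 0\<close> apply the axiom to \<open>1/b\<close>: the quotient only changes sign.\<close>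
lemma rosenlicht_quotient_pos_nonunit:
  assumes "v u \<ge> 0" and "v b \<noteq> 0" and "b \<noteq> 0" and "D b \<noteq> 0"
  shows "v (b * D u / D b) > 0"
proof (cases "v b > 0")
  case True
  then show ?thesis using assms by (intro rosenlicht_quotient_pos)
next
  case False
  obtain g where g: "v b = Fin g" using assms(3) by (rule valuation_Fin[OF valuation])
  with False assms(2) have "g < 0" by (auto simp: zero_extended_def)
  then have "v (inverse b) > 0"
    using valuation_inverse[OF valuation assms(3)] g by (simp add: zero_extended_def)
  then have "v (inverse b * D u / D (inverse b)) > 0"
    using assms by (intro rosenlicht_quotient_pos) auto
  moreover have "inverse b * D u / D (inverse b) = - (b * D u / D b)"
    unfolding derivation_inverse[OF derivation assms(3)]
    using assms by (simp add: field_simps power2_eq_square)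
  ultimately show ?thesis by (simp add: valuation_minus[OF valuation])
qed

lemma valuation_derivative_mono:
  assumes "v b \<noteq> 0" and "b \<noteq> 0" and "D b \<noteq> 0" and "v b \<le> v t"
  shows "v (D b) \<le> v (D t)"
proof -
  define u where "u = t / b"
  obtain d where d: "v (D b) = Fin d" using assms(3) by (rule valuation_Fin[OF valuation])
  obtain g where g: "v b = Fin g" using assms(2) by (rule valuation_Fin[OF valuation])
  have "v t = v u + Fin g"
    using valuation_mult[OF valuation, of u b] assms(2) g unfolding u_def by simp
  then have u_nonneg: "v u \<ge> 0"
    using assms(4) g valuation_not_Minf[OF valuation, of u]
    by (cases "v u") (auto simp: zero_extended_def)
  have "v (b * D u) = v (b * D u / D b) + v (D b)"
    using valuation_mult[OF valuation, of "b * D u / D b" "D b"] assms(3) by simp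
  then have small: "v (D b) < v (b * D u)"
    using rosenlicht_quotient_pos_nonunit[OF u_nonneg assms(1-3)] d
    by (simp add: extended_less_add_Fin)
  have large: "v (D b) \<le> v (u * D b)"
    using valuation_mult[OF valuation, of u "D b"] u_nonneg by (simp add: extended_le_add)
  have "D t = u * D b + b * D u"
    using derivation_mult[OF derivation, of u b] assms(2) unfolding u_def
    by (simp add: mult.commute)
  then show ?thesis
    using valuation_add[OF valuation, of "u * D b" "b * D u"] small large
    by (auto simp: min_def split: if_splits)
qed

lemma nonunit_with_same_derivative:
  assumes "D a \<noteq> 0"
  obtains b where "D b = D a" and "b \<noteq> 0" and "v b \<noteq> 0"
proof (cases "v a = 0")
  case True
  then obtain c where c: "D c = 0" "v (a - c) > 0" by (rule unit_near_constant)
  then have "D (a - c) = D a" by (simp add: derivation_diff[OF derivation])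
  moreover from this have "a - c \<noteq> 0" using assms derivation_zero[OF derivation] by auto
  ultimately show thesis using that c(2) by fastforce
next
  case False
  moreover have "a \<noteq> 0" using assms derivation_zero[OF derivation] by auto
  ultimately show thesis using that by blast
qed

lemma derivative_image_vball:
  assumes "v b \<noteq> 0" and "b \<noteq> 0" and "D b \<noteq> 0"
  shows "D ` vball v y (y + b) \<subseteq> {x. v (D b) \<le> v (D y - x)}"
proof
  fix x assume "x \<in> D ` vball v y (y + b)"
  then obtain w where "x = D w" and "v b \<le> v (y - w)"
    unfolding vball_def by (auto simp: valuation_minus[OF valuation])
  then show "x \<in> {x. v (D b) \<le> v (D y - x)}"
    using valuation_derivative_mono[OF assms, of "y - w"]
    by (simp add: derivation_diff[OF derivation])
qed

lemma asymptotic_integration_imp_immediate: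
  assumes "asymptotic_integration D v"
  shows "immediate v D"
  unfolding immediate_def attractor_def
proof (intro allI impI)
  fix z' y assume "z' \<noteq> D y"
  then obtain a where a: "v (z' - D y) < v (z' - D y - D a)"
    using assms unfolding asymptotic_integration_def by (metis right_minus_eq)
  have "v (D a) = v (z' - D y)"
    using a by (rule valuation_eq_if_diff_greater[OF valuation])
  moreover have "z' - D y \<noteq> 0" using \<open>z' \<noteq> D y\<close> by simp
  ultimately have "D a \<noteq> 0" by (metis valuation_eq_Pinf_iff[OF valuation])
  then obtain b where b: "D b = D a" "b \<noteq> 0" "v b \<noteq> 0"
    by (rule nonunit_with_same_derivative)
  have closer: "v (D y - z') < v (D (y + b) - z')"
    using a b(1) valuation_minus_commute[OF valuation]
    by (simp add: derivation_add[OF derivation] algebra_simps)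
  have "D ` vball v y (y + b) \<subseteq> vball v (D y) z'"
    using derivative_image_vball[OF b(3,2)] b(1) \<open>D a \<noteq> 0\<close> \<open>v (D a) = v (z' - D y)\<close>
      valuation_minus_commute[OF valuation, of z' "D y"]
    by (auto simp: vball_def)
  with closer show "\<exists>z. v (D y - z') < v (D z - z') \<and> D ` vball v y z \<subseteq> vball v (D y) z'"
    by blast
qed

end

theorem proposition54:
  fixes D :: "'a::field \<Rightarrow> 'a" and v :: "'a \<Rightarrow> 'g::linordered_ab_group_add extended"
  assumes "derivation D"
    and "differential_valuation D v"
  shows "immediate v D \<longleftrightarrow> asymptotic_integration D v"
proof -
  interpret differential_valued_field D v using assms by unfold_locales
  show ?thesis
    using immediate_imp_asymptotic_integration[of v D, OF valuation derivation_zero[OF derivation]]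
      asymptotic_integration_imp_immediate by blast
qed

end
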